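(* Let $L:\mathbb{R}^k\to\mathbb{R}^{m+1}$ be a linear map such that $t(L)<t(L_{[m]})$. Then \[ t(L)\leq \max\left\{ \tfrac34\, t(L_{[m]}),\ t(L_{[m]})-2^{k-s-1}\right\},\] where $s=|S(L_{[m]})|$.
   Context: $\mathbb{H}^n=\{0,1\}^n$, $e_1,\dots,e_k$ the standard basis of $\mathbb{R}^k$. For a linear map $L:\mathbb{R}^k\to\mathbb{R}^n$, $t(L)=|L^{-1}(\mathbb{H}^n)\cap\mathbb{H}^k|$ and $S(L)=\{i\in[k]:L(e_i)\neq0\}$. For $A\subseteq[m+1]$, $L_A=\pi_A\circ L:\mathbb{R}^k\to\mathbb{R}^{|A|}$, where $\pi_A$ is the projection onto the coordinates in $A$; in particular $L_{[m]}$ consists of the first $m$ coordinates of $L$. *)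

theory Defs
  imports "HOL-Analysis.Analysis"
begin

text \<open>A linear map L : R^k -> R^n is represented by its matrix
  L :: nat => nat => real, entry L i j for row i < n and column j < k.
  Points of R^k are functions nat => real, only coordinates j < k matter.\<close>

definition hcube :: "nat \<Rightarrow> (nat \<Rightarrow> real) set" where
  "hcube k = ({..<k} \<rightarrow>\<^sub>E {0, 1})"

definition lin_apply :: "(nat \<Rightarrow> nat \<Rightarrow> real) \<Rightarrow> nat \<Rightarrow> (nat \<Rightarrow> real) \<Rightarrow> nat \<Rightarrow> real" where
  "lin_apply L k x i = (\<Sum>j<k. L i j * x j)"

text \<open>t(L) for L : R^k -> R^n (only rows i < n are used): number of points of
  the k-cube mapped into the n-cube. Taking n = m gives t(L_[m]).\<close>
definition tcount :: "(nat \<Rightarrow> nat \<Rightarrow> real) \<Rightarrow> nat \<Rightarrow> nat \<Rightarrow> nat" where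
  "tcount L k n = card {x \<in> hcube k. \<forall>i<n. lin_apply L k x i \<in> {0, 1}}"

definition supp_set :: "(nat \<Rightarrow> nat \<Rightarrow> real) \<Rightarrow> nat \<Rightarrow> nat \<Rightarrow> nat set" where
  "supp_set L k n = {j. j < k \<and> (\<exists>i<n. L i j \<noteq> 0)}"

end

theory Submission
  imports Defs
begin

text \<open>Let \<open>A\<close> be the set of cube points solving the first \<open>m\<close> rows and \<open>D \<subseteq> A\<close> those
  failing row \<open>m\<close>, so that \<open>t(L) = |A| - |D|\<close> and \<open>D \<noteq> {}\<close>. Flipping a coordinate outside
  \<open>S(L\<^sub>[\<^sub>m\<^sub>])\<close> keeps a point in \<open>A\<close>. If two such coordinates \<open>j\<^sub>1 \<noteq> j\<^sub>2\<close> have nonzero entries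
  in row \<open>m\<close>, the values \<open>u, u + d\<^sub>1, u + d\<^sub>2, u + d\<^sub>1 + d\<^sub>2\<close> (\<open>d\<^sub>1, d\<^sub>2 \<noteq> 0\<close>) of row \<open>m\<close> on an
  orbit of the two flips cannot all lie in \<open>{0, 1}\<close>, so \<open>|A| \<le> 4 |D|\<close>. Otherwise at least \<open>k - s - 1\<close> coordinates do
  not occur in any of the rows \<open>0, \<dots>, m\<close>; varying them freely in a point of \<open>D\<close> gives
  \<open>|D| \<ge> 2\<^sup>k\<^sup>-\<^sup>s\<^sup>-\<^sup>1\<close>.\<close>

definition cube_solutions :: "(nat \<Rightarrow> nat \<Rightarrow> real) \<Rightarrow> nat \<Rightarrow> nat \<Rightarrow> (nat \<Rightarrow> real) set" where
  "cube_solutions L k n = {x \<in> hcube k. \<forall>i<n. lin_apply L k x i \<in> {0, 1}}"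

definition flip_coord :: "nat \<Rightarrow> (nat \<Rightarrow> real) \<Rightarrow> nat \<Rightarrow> real" where
  "flip_coord j x = x(j := 1 - x j)"

lemma tcount_eq_card_cube_solutions: "tcount L k n = card (cube_solutions L k n)"
  unfolding tcount_def cube_solutions_def ..

lemma finite_hcube: "finite (hcube k)"
  unfolding hcube_def by (auto intro: finite_PiE)

lemma hcube_coord: "x \<in> hcube k \<Longrightarrow> j < k \<Longrightarrow> x j = 0 \<or> x j = 1"
  unfolding hcube_def by auto

lemma finite_cube_solutions: "finite (cube_solutions L k n)"
  unfolding cube_solutions_def using finite_hcube by auto

lemma cube_solutions_Suc:
  "cube_solutions L k (Suc n) = {x \<in> cube_solutions L k n. lin_apply L k x n \<in> {0, 1}}"
  unfolding cube_solutions_def by (auto simp: less_Suc_eq)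

lemma cube_solutions_Suc_subset: "cube_solutions L k (Suc n) \<subseteq> cube_solutions L k n"
  by (auto simp: cube_solutions_Suc)

lemma card_cube_solutions_eq_Suc_add_failures:
  "card (cube_solutions L k n)
     = card (cube_solutions L k (Suc n)) + card (cube_solutions L k n - cube_solutions L k (Suc n))"
  using cube_solutions_Suc_subset finite_cube_solutions
  by (metis card_Diff_subset card_mono le_add_diff_inverse)

lemma not_in_supp_set: "j < k \<Longrightarrow> j \<notin> supp_set L k m \<Longrightarrow> i < m \<Longrightarrow> L i j = 0"
  unfolding supp_set_def by auto

lemma flip_coord_flip_coord [simp]: "flip_coord j (flip_coord j x) = x"
  unfolding flip_coord_def by auto

lemma flip_coord_other [simp]: "j' \<noteq> j \<Longrightarrow> flip_coord j x j' = x j'"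
  unfolding flip_coord_def by simp

lemma flip_coord_in_hcube: "x \<in> hcube k \<Longrightarrow> j < k \<Longrightarrow> flip_coord j x \<in> hcube k"
  unfolding hcube_def flip_coord_def by (auto simp: PiE_iff extensional_def)

lemma lin_apply_flip_coord:
  assumes "j < k"
  shows "lin_apply L k (flip_coord j x) i = lin_apply L k x i + L i j * (1 - 2 * x j)"
proof -
  have "lin_apply L k (flip_coord j x) i
        = (\<Sum>l<k. L i l * x l + (if l = j then L i j * (1 - 2 * x j) else 0))"
    unfolding lin_apply_def flip_coord_def by (rule sum.cong) (auto simp: algebra_simps)
  also have "\<dots> = lin_apply L k x i + L i j * (1 - 2 * x j)"
    using assms by (simp add: sum.distrib lin_apply_def)
  finally show ?thesis .
qed

lemma flip_coord_in_cube_solutions: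
  assumes "x \<in> cube_solutions L k m" "j < k" "j \<notin> supp_set L k m"
  shows "flip_coord j x \<in> cube_solutions L k m"
  using assms flip_coord_in_hcube lin_apply_flip_coord not_in_supp_set[OF assms(2,3)]
  unfolding cube_solutions_def by simp

text \<open>If \<open>u\<close>, \<open>u + d\<^sub>1\<close>, \<open>u + d\<^sub>2\<close> all lie in \<open>{0, 1}\<close>, then \<open>d\<^sub>1 = d\<^sub>2 = 1 - 2u\<close>, and
  \<open>u + d\<^sub>1 + d\<^sub>2 = 2 - 3u\<close> is \<open>2\<close> or \<open>-1\<close>.\<close>
lemma not_all_binary_corners:
  fixes u d\<^sub>1 d\<^sub>2 :: real
  assumes "d\<^sub>1 \<noteq> 0" "d\<^sub>2 \<noteq> 0" "u \<in> {0, 1}" "u + d\<^sub>1 \<in> {0, 1}" "u + d\<^sub>2 \<in> {0, 1}"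
  shows "u + d\<^sub>1 + d\<^sub>2 \<notin> {0, 1}"
  using assms by auto

lemma card_le_4_card_if_cover:
  assumes "finite D" "A \<subseteq> D \<union> f ` D \<union> g ` D \<union> h ` D"
  shows "card A \<le> 4 * card D"
proof -
  have "card A \<le> card (D \<union> f ` D \<union> g ` D \<union> h ` D)"
    using assms by (intro card_mono) auto
  also have "\<dots> \<le> card D + card (f ` D) + card (g ` D) + card (h ` D)"
    by (meson add_le_mono card_Un_le dual_order.trans le_refl)
  also have "\<dots> \<le> 4 * card D"
    using card_image_le[OF assms(1), of f] card_image_le[OF assms(1), of g]
      card_image_le[OF assms(1), of h] by linarith
  finally show ?thesis .
qed

lemma card_cube_solutions_le_4_card_failures:
  assumes "j\<^sub>1 \<noteq> j\<^sub>2" "j\<^sub>1 < k" "j\<^sub>2 < k"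
    and "j\<^sub>1 \<notin> supp_set L k m" "j\<^sub>2 \<notin> supp_set L k m"
    and "L m j\<^sub>1 \<noteq> 0" "L m j\<^sub>2 \<noteq> 0"
  shows "card (cube_solutions L k m) \<le> 4 * card (cube_solutions L k m - cube_solutions L k (Suc m))"
proof (rule card_le_4_card_if_cover)
  let ?A = "cube_solutions L k m"
  let ?D = "cube_solutions L k m - cube_solutions L k (Suc m)"
  let ?f\<^sub>1 = "flip_coord j\<^sub>1" and ?f\<^sub>2 = "flip_coord j\<^sub>2"
  show "finite ?D"
    using finite_cube_solutions by blast
  show "?A \<subseteq> ?D \<union> ?f\<^sub>1 ` ?D \<union> ?f\<^sub>2 ` ?D \<union> (?f\<^sub>2 \<circ> ?f\<^sub>1) ` ?D"
  proof
    fix x assume x: "x \<in> ?A"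
    then have "x \<in> hcube k"
      by (simp add: cube_solutions_def)
    define u where "u = lin_apply L k x m"
    define d\<^sub>1 where "d\<^sub>1 = L m j\<^sub>1 * (1 - 2 * x j\<^sub>1)"
    define d\<^sub>2 where "d\<^sub>2 = L m j\<^sub>2 * (1 - 2 * x j\<^sub>2)"
    have "d\<^sub>1 \<noteq> 0" "d\<^sub>2 \<noteq> 0"
      using assms hcube_coord[OF \<open>x \<in> hcube k\<close>, of j\<^sub>1] hcube_coord[OF \<open>x \<in> hcube k\<close>, of j\<^sub>2]
      by (auto simp: d\<^sub>1_def d\<^sub>2_def)
    moreover have "lin_apply L k (?f\<^sub>1 x) m = u + d\<^sub>1" "lin_apply L k (?f\<^sub>2 x) m = u + d\<^sub>2"
        "lin_apply L k (?f\<^sub>1 (?f\<^sub>2 x)) m = u + d\<^sub>1 + d\<^sub>2"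
      using assms lin_apply_flip_coord by (simp_all add: u_def d\<^sub>1_def d\<^sub>2_def)
    ultimately have "\<not> (\<forall>y \<in> {x, ?f\<^sub>1 x, ?f\<^sub>2 x, ?f\<^sub>1 (?f\<^sub>2 x)}. lin_apply L k y m \<in> {0, 1})"
      using not_all_binary_corners[of d\<^sub>1 d\<^sub>2 u] by (simp only: ball_simps u_def) blast
    moreover have "{x, ?f\<^sub>1 x, ?f\<^sub>2 x, ?f\<^sub>1 (?f\<^sub>2 x)} \<subseteq> ?A"
      using x assms flip_coord_in_cube_solutions by simp
    ultimately consider "x \<in> ?D" | "?f\<^sub>1 x \<in> ?D" | "?f\<^sub>2 x \<in> ?D" | "?f\<^sub>1 (?f\<^sub>2 x) \<in> ?D"
      unfolding cube_solutions_Suc by blast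
    then show "x \<in> ?D \<union> ?f\<^sub>1 ` ?D \<union> ?f\<^sub>2 ` ?D \<union> (?f\<^sub>2 \<circ> ?f\<^sub>1) ` ?D"
    proof cases
      case 1
      then show ?thesis by blast
    next
      case 2
      then have "x \<in> ?f\<^sub>1 ` ?D"
        by (rule image_eqI[rotated]) simp
      then show ?thesis by blast
    next
      case 3
      then have "x \<in> ?f\<^sub>2 ` ?D"
        by (rule image_eqI[rotated]) simp
      then show ?thesis by blast
    next
      case 4
      then have "x \<in> (?f\<^sub>2 \<circ> ?f\<^sub>1) ` ?D"
        by (rule image_eqI[rotated]) simp
      then show ?thesis by blast
    qed
  qed
qed

lemma two_pow_card_le_card_failures:
  assumes x\<^sub>0: "x\<^sub>0 \<in> cube_solutions L k m - cube_solutions L k (Suc m)"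
    and R: "R \<subseteq> {..<k}" "\<And>i j. i \<le> m \<Longrightarrow> j \<in> R \<Longrightarrow> L i j = 0"
  shows "2 ^ card R \<le> card (cube_solutions L k m - cube_solutions L k (Suc m))"
proof -
  let ?D = "cube_solutions L k m - cube_solutions L k (Suc m)"
  define \<phi> where "\<phi> z = (\<lambda>j. if j \<in> R then z j else x\<^sub>0 j)" for z :: "nat \<Rightarrow> real"
  have lin_apply_\<phi>: "lin_apply L k (\<phi> z) i = lin_apply L k x\<^sub>0 i" if "i \<le> m" for z i
    unfolding lin_apply_def \<phi>_def using R(2)[OF that] by (intro sum.cong) auto
  have "x\<^sub>0 \<in> cube_solutions L k m" "lin_apply L k x\<^sub>0 m \<notin> {0, 1}"
    using x\<^sub>0 by (auto simp: cube_solutions_Suc)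
  then have "x\<^sub>0 \<in> hcube k" "\<forall>i<m. lin_apply L k x\<^sub>0 i \<in> {0, 1}" "lin_apply L k x\<^sub>0 m \<notin> {0, 1}"
    by (simp_all add: cube_solutions_def)
  moreover have "\<phi> z \<in> hcube k" if "z \<in> R \<rightarrow>\<^sub>E {0, 1}" for z
    using that R(1) \<open>x\<^sub>0 \<in> hcube k\<close> unfolding hcube_def \<phi>_def by (auto simp: PiE_iff extensional_def)
  ultimately have "\<phi> ` (R \<rightarrow>\<^sub>E {0, 1}) \<subseteq> ?D"
    using lin_apply_\<phi> by (auto simp: cube_solutions_Suc cube_solutions_def)
  moreover have "inj_on \<phi> (R \<rightarrow>\<^sub>E {0, 1})"
  proof (rule inj_onI)
    fix z z' assume z: "z \<in> R \<rightarrow>\<^sub>E {0, 1}" and z': "z' \<in> R \<rightarrow>\<^sub>E {0, 1}" and "\<phi> z = \<phi> z'"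
    show "z = z'"
    proof (rule PiE_ext[OF z z'])
      fix j assume "j \<in> R"
      then show "z j = z' j"
        using fun_cong[OF \<open>\<phi> z = \<phi> z'\<close>, of j] by (simp add: \<phi>_def)
    qed
  qed
  moreover have "finite R"
    using R(1) finite_subset by blast
  ultimately have "card (R \<rightarrow>\<^sub>E ({0, 1} :: real set)) \<le> card ?D"
    using finite_cube_solutions by (intro card_inj_on_le) auto
  then show ?thesis
    using \<open>finite R\<close> by (simp add: card_PiE numeral_2_eq_2)
qed

lemma card_columns_outside_supp_set:
  "card {j. j < k \<and> j \<notin> supp_set L k m \<and> L m j = 0}
     + card {j. j < k \<and> j \<notin> supp_set L k m \<and> L m j \<noteq> 0} = k - card (supp_set L k m)"
proof -
  have "supp_set L k m \<subseteq> {..<k}"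
    unfolding supp_set_def by auto
  then have "k - card (supp_set L k m) = card ({..<k} - supp_set L k m)"
    by (simp add: card_Diff_subset finite_subset)
  also have "{..<k} - supp_set L k m
      = {j. j < k \<and> j \<notin> supp_set L k m \<and> L m j = 0} \<union> {j. j < k \<and> j \<notin> supp_set L k m \<and> L m j \<noteq> 0}"
    by auto
  also have "card \<dots> = card {j. j < k \<and> j \<notin> supp_set L k m \<and> L m j = 0}
      + card {j. j < k \<and> j \<notin> supp_set L k m \<and> L m j \<noteq> 0}"
    by (rule card_Un_disjoint) auto
  finally show ?thesis ..
qed

lemma card_cube_solutions_Suc_le_three_quarters:
  assumes "j\<^sub>1 \<noteq> j\<^sub>2" "j\<^sub>1 < k" "j\<^sub>2 < k"
    and "j\<^sub>1 \<notin> supp_set L k m" "j\<^sub>2 \<notin> supp_set L k m"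
    and "L m j\<^sub>1 \<noteq> 0" "L m j\<^sub>2 \<noteq> 0"
  shows "real (card (cube_solutions L k (Suc m))) \<le> 3 / 4 * real (card (cube_solutions L k m))"
proof -
  have "real (4 * card (cube_solutions L k (Suc m))) \<le> real (3 * card (cube_solutions L k m))"
    unfolding of_nat_le_iff
    using card_cube_solutions_le_4_card_failures[OF assms]
      card_cube_solutions_eq_Suc_add_failures[of L k m] by linarith
  then show ?thesis
    by simp
qed

lemma card_cube_solutions_Suc_le_diff_two_powr:
  assumes "cube_solutions L k (Suc m) \<subset> cube_solutions L k m"
    and "card {j. j < k \<and> j \<notin> supp_set L k m \<and> L m j \<noteq> 0} \<le> 1"
  shows "real (card (cube_solutions L k (Suc m)))
           \<le> real (card (cube_solutions L k m)) - 2 powr (real k - real (card (supp_set L k m)) - 1)"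
proof -
  let ?A = "cube_solutions L k m" and ?B = "cube_solutions L k (Suc m)"
  let ?R = "{j. j < k \<and> j \<notin> supp_set L k m \<and> L m j = 0}"
  obtain x\<^sub>0 where "x\<^sub>0 \<in> ?A - ?B"
    using assms(1) by blast
  then have "2 ^ card ?R \<le> card (?A - ?B)"
    using not_in_supp_set by (intro two_pow_card_le_card_failures) (auto simp: le_less)
  then have "(2::real) ^ card ?R \<le> card (?A - ?B)"
    by (metis of_nat_le_iff of_nat_numeral of_nat_power)
  moreover have "real k - real (card (supp_set L k m)) - 1 \<le> card ?R"
    using assms(2) card_columns_outside_supp_set[of k L m] by linarith
  then have "2 powr (real k - real (card (supp_set L k m)) - 1) \<le> 2 ^ card ?R"
    by (metis powr_mono powr_realpow one_le_numeral zero_less_numeral)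
  ultimately show ?thesis
    unfolding card_cube_solutions_eq_Suc_add_failures[of L k m] of_nat_add by linarith
qed

theorem lemma4p2:
  fixes L :: "nat \<Rightarrow> nat \<Rightarrow> real" and k m :: nat
  assumes "tcount L k (m + 1) < tcount L k m"
  shows "real (tcount L k (m + 1))
           \<le> max (3 / 4 * real (tcount L k m))
                   (real (tcount L k m) - 2 powr (real k - real (card (supp_set L k m)) - 1))"
proof -
  let ?N = "{j. j < k \<and> j \<notin> supp_set L k m \<and> L m j \<noteq> 0}"
  have "cube_solutions L k (Suc m) \<subset> cube_solutions L k m"
    using assms cube_solutions_Suc_subset by (auto simp: tcount_eq_card_cube_solutions)
  show ?thesis
  proof (cases "card ?N \<le> 1")
    case True
    then show ?thesis
      using card_cube_solutions_Suc_le_diff_two_powr[OF \<open>_ \<subset> _\<close>]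
      by (simp add: tcount_eq_card_cube_solutions max.coboundedI2)
  next
    case False
    then obtain j\<^sub>1 j\<^sub>2 where "j\<^sub>1 \<in> ?N" "j\<^sub>2 \<in> ?N" "j\<^sub>1 \<noteq> j\<^sub>2"
      using card_le_Suc0_iff_eq[of ?N] by auto
    then show ?thesis
      using card_cube_solutions_Suc_le_three_quarters[of j\<^sub>1 j\<^sub>2 k L m]
      by (simp add: tcount_eq_card_cube_solutions max.coboundedI1)
  qed
qed

end
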